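(* The rational function \[ \psi_{32}(z)=\frac{\frac{1246}{384649}z^3+\frac{2289}{34970}z^2+\frac{119}{269}z+1}{-\frac{4}{327}z^3+\frac{8}{65}z^2-\frac{150}{269}z+1} \] belongs to $\Pi_{3/3,2}$ and satisfies $R(\psi_{32})=x_0\approx 6.778307398$, where $x_0$ is the smallest real root of \[ 43572620x^3-880461561x^2+5950520030x-13451175530=0. \] In particular $R_{3/3,2}>6$.
   Context: A real rational function $\psi$ is always considered in lowest terms, as a smooth function on $\mathbb{R}$ minus its finitely many poles. It is absolutely monotonic at $x\in\mathbb{R}$ if $x$ is not a pole and $\psi^{(k)}(x)\ge 0$ for all integers $k\ge 0$. The radius of absolute monotonicity is $R(\psi)=\sup\big(\{r\in[0,\infty): \psi \text{ is absolutely monotonic at each point of } [-r,0]\}\cup\{0\}\big)\in[0,+\infty]$. For $m,n,p\in\mathbb{N}$, $\Pi_{m/n,p}$ denotes the set of rational functions $\psi=P/Q$ with $P,Q$ real polynomials, $\deg P\le m$, $Q\not\equiv 0$, $\deg Q\le n$, such that $\psi(z)-e^z=O(z^{p+1})$ as $z\to 0$. Finally, $R_{m/n,p}=\sup\{R(\psi):\psi\in\Pi_{m/n,p}\}$. *)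

theory Defs
  imports "HOL-Analysis.Analysis" "HOL-Computational_Algebra.Polynomial_Factorial" "HOL-Computational_Algebra.Field_as_Ring"
    "HOL-Library.Landau_Symbols"
begin

text \<open>A real rational function is given by a pair (P, Q) of real polynomials with Q nonzero.
  As a function it is taken in lowest terms: we cancel the gcd of P and Q.\<close>

definition red_num :: "real poly \<Rightarrow> real poly \<Rightarrow> real poly" where
  "red_num P Q = P div gcd P Q"

definition red_den :: "real poly \<Rightarrow> real poly \<Rightarrow> real poly" where
  "red_den P Q = Q div gcd P Q"

definition ratfun :: "real poly \<Rightarrow> real poly \<Rightarrow> real \<Rightarrow> real" where
  "ratfun P Q x = poly (red_num P Q) x / poly (red_den P Q) x"

definition abs_monotonic_at :: "real poly \<Rightarrow> real poly \<Rightarrow> real \<Rightarrow> bool" where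
  "abs_monotonic_at P Q x \<longleftrightarrow>
     poly (red_den P Q) x \<noteq> 0 \<and> (\<forall>k::nat. (deriv ^^ k) (ratfun P Q) x \<ge> 0)"

definition radius_am :: "real poly \<Rightarrow> real poly \<Rightarrow> ereal" where
  "radius_am P Q = Sup (ereal ` ({r. r \<ge> 0 \<and> (\<forall>x\<in>{-r..0}. abs_monotonic_at P Q x)} \<union> {0}))"

definition Pi_class :: "nat \<Rightarrow> nat \<Rightarrow> nat \<Rightarrow> (real poly \<times> real poly) set" where
  "Pi_class m n p = {(P, Q). degree P \<le> m \<and> Q \<noteq> 0 \<and> degree Q \<le> n \<and>
     (\<lambda>z. poly P z / poly Q z - exp z) \<in> O[at (0::real)](\<lambda>z. z ^ (p + 1))}"

definition R_opt :: "nat \<Rightarrow> nat \<Rightarrow> nat \<Rightarrow> ereal" where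
  "R_opt m n p = Sup ((\<lambda>(P, Q). radius_am P Q) ` Pi_class m n p)"

definition psi32_num :: "real poly" where
  "psi32_num = [: 1, 119/269, 2289/34970, 1246/384649 :]"

definition psi32_den :: "real poly" where
  "psi32_den = [: 1, -150/269, 8/65, -4/327 :]"

definition x0_cubic :: "real \<Rightarrow> real" where
  "x0_cubic x = 43572620 * x^3 - 880461561 * x^2 + 5950520030 * x - 13451175530"

end

theory Submission
  imports Defs "HOL-Analysis.FPS_Convergence" "HOL-Real_Asymp.Real_Asymp"
begin

text \<open>
  (2) The numerator satisfies N(y) = -q(-y)/13451175530 for the cubic q = x0_cubic, which is
  strictly increasing with a single real root x0 in (6.778307398, 6.778307399), while D \<ge> 1 on
  (-\<infinity>, 0]. Hence \<psi> is negative to the left of -x0, so the radius is at most x0.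

  (3) Conversely \<psi> \<ge> 0 on [-x0, 0], and for derivatives of positive order we expand \<psi> around the
  point c = -5687/839 < -x0: \<psi>(c + z) = \<Sum> c_n z^n for |z| < 9 with c_n \<ge> 0 for n \<ge> 1. Every
  derivative of positive order at a point of [-x0, 0] \<subseteq> (c, c + 9) is then a power series with
  nonnegative coefficients evaluated at a nonnegative argument.

  (4) The coefficients are c_n = b_n / 10^n, where b obeys the third-order linear recurrence
  b_(n+3) = rc0 b_n + rc1 b_(n+1) + rc2 b_(n+2) (n \<ge> 1) coming from the shifted denominator.
  After clearing denominators b_1, ..., b_11 are explicit integers; b_1, ..., b_8 are positive,
  and from n = 9 on the triples (b_n, b_(n+1), b_(n+2)) stay in an explicit Lorentz (second-order)
  cone that the recurrence maps into itself. On that cone the first coordinate is nonnegative and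
  bounded, which yields c_n \<ge> 0 and a radius of convergence of at least 9.
\<close>

section \<open>Sylvester's criterion and Lorentz cones in \<real>^3\<close>

lemma psd3_sylvester:
  fixes a b c d e f x y z :: real
  assumes "a > 0" "a*b - d^2 > 0" "(a*b - d^2)*(a*c - e^2) - (a*f - d*e)^2 \<ge> 0"
  shows "a*x^2 + b*y^2 + c*z^2 + 2*d*x*y + 2*e*x*z + 2*f*y*z \<ge> 0"
proof -
  define B C E where "B = a*b - d^2" and "C = a*c - e^2" and "E = a*f - d*e"
  have "B > 0" "B*C - E^2 \<ge> 0" using assms unfolding B_def C_def E_def by auto
  have outer: "a*(a*x^2 + b*y^2 + c*z^2 + 2*d*x*y + 2*e*x*z + 2*f*y*z)
      = (a*x + d*y + e*z)^2 + (B*y^2 + C*z^2 + 2*E*y*z)"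
    unfolding B_def C_def E_def by (simp add: power2_eq_square algebra_simps)
  have inner: "B*(B*y^2 + C*z^2 + 2*E*y*z) = (B*y + E*z)^2 + (B*C - E^2)*z^2"
    by (simp add: power2_eq_square algebra_simps)
  have "B*(B*y^2 + C*z^2 + 2*E*y*z) \<ge> 0"
    unfolding inner using \<open>B*C - E^2 \<ge> 0\<close> by simp
  with \<open>B > 0\<close> have "B*y^2 + C*z^2 + 2*E*y*z \<ge> 0" by (simp add: zero_le_mult_iff)
  hence "a*(a*x^2 + b*y^2 + c*z^2 + 2*d*x*y + 2*e*x*z + 2*f*y*z) \<ge> 0"
    unfolding outer by simp
  with \<open>a > 0\<close> show ?thesis by (simp add: zero_le_mult_iff)
qed

definition lorentz_form ::
    "real \<times> real \<times> real \<Rightarrow> real \<times> real \<times> real \<Rightarrow> real \<times> real \<times> real \<Rightarrow>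
     real \<times> real \<times> real \<Rightarrow> real \<times> real \<times> real \<Rightarrow> real" where
  "lorentz_form l m n u w = (l \<bullet> u) * (l \<bullet> w) - (m \<bullet> u) * (m \<bullet> w) - (n \<bullet> u) * (n \<bullet> w)"

definition lorentz_cone ::
    "real \<times> real \<times> real \<Rightarrow> real \<times> real \<times> real \<Rightarrow> real \<times> real \<times> real \<Rightarrow> (real \<times> real \<times> real) set" where
  "lorentz_cone l m n = {v. 0 \<le> l \<bullet> v \<and> 0 \<le> lorentz_form l m n v v}"

lemma inner_triple: "(a, b, c) \<bullet> (x, y, z) = a * x + b * y + c * (z::real)"
  by (simp add: inner_Pair)

text \<open>Functionals a l + b m + c n with (b, c) of length at most a are nonnegative on the cone
  (Cauchy-Schwarz); this is how linear inequalities on the cone are certified.\<close>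

lemma lorentz_cone_dual:
  assumes v: "v \<in> lorentz_cone l m n" and abc: "b^2 + c^2 \<le> a^2" "0 \<le> a"
  shows "0 \<le> (a *\<^sub>R l + b *\<^sub>R m + c *\<^sub>R n) \<bullet> v"
proof -
  define L M N where "L = l \<bullet> v" and "M = m \<bullet> v" and "N = n \<bullet> v"
  have L: "0 \<le> L" "M^2 + N^2 \<le> L^2"
    using v unfolding lorentz_cone_def lorentz_form_def L_def M_def N_def
    by (auto simp: power2_eq_square)
  have "(b * M + c * N)^2 \<le> (b^2 + c^2) * (M^2 + N^2)"
  proof -
    have "(b^2 + c^2) * (M^2 + N^2) - (b * M + c * N)^2 = (b * N - c * M)^2"
      by (simp add: power2_eq_square algebra_simps)
    thus ?thesis by (metis diff_ge_0_iff_ge zero_le_power2)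
  qed
  also have "\<dots> \<le> a^2 * L^2"
    using L abc by (intro mult_mono) auto
  also have "\<dots> = (a * L)^2" by (simp add: power_mult_distrib)
  finally have "\<bar>b * M + c * N\<bar> \<le> \<bar>a * L\<bar>" by (simp only: abs_le_square_iff)
  moreover have "\<bar>a * L\<bar> = a * L" using L abc by simp
  ultimately show ?thesis unfolding L_def M_def N_def by (simp add: inner_add_left)
qed

lemma lorentz_cone_scale:
  assumes "0 < s"
  shows "s *\<^sub>R v \<in> lorentz_cone l m n \<longleftrightarrow> v \<in> lorentz_cone l m n"
proof -
  have "lorentz_form l m n (s *\<^sub>R v) (s *\<^sub>R v) = s^2 * lorentz_form l m n v v"
    by (simp add: lorentz_form_def power2_eq_square algebra_simps)
  thus ?thesis using assms
    by (simp add: lorentz_cone_def zero_le_mult_iff)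
qed

lemma lorentz_form_expand:
  shows "lorentz_form l m n (x, y, z) (x, y, z) =
    lorentz_form l m n (1, 0, 0) (1, 0, 0) * x^2 + lorentz_form l m n (0, 1, 0) (0, 1, 0) * y^2
    + lorentz_form l m n (0, 0, 1) (0, 0, 1) * z^2 + 2 * lorentz_form l m n (1, 0, 0) (0, 1, 0) * x * y
    + 2 * lorentz_form l m n (1, 0, 0) (0, 0, 1) * x * z + 2 * lorentz_form l m n (0, 1, 0) (0, 0, 1) * y * z"
proof -
  obtain l0 l1 l2 m0 m1 m2 n0 n1 n2 where "l = (l0, l1, l2)" "m = (m0, m1, m2)" "n = (n0, n1, n2)"
    by (metis prod.exhaust)
  thus ?thesis unfolding lorentz_form_def by (simp add: inner_triple power2_eq_square algebra_simps)
qed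

lemma lorentz_form_gain:
  fixes l m n l' m' n' :: "real \<times> real \<times> real" and tau :: real
  defines "G u w \<equiv> lorentz_form l' m' n' u w - tau * lorentz_form l m n u w"
  defines "e1 \<equiv> (1, 0, 0)" and "e2 \<equiv> (0, 1, 0)" and "e3 \<equiv> (0, 0, 1)"
  assumes "G e1 e1 > 0" "G e1 e1 * G e2 e2 - (G e1 e2)^2 > 0"
    "(G e1 e1 * G e2 e2 - (G e1 e2)^2) * (G e1 e1 * G e3 e3 - (G e1 e3)^2)
       - (G e1 e1 * G e2 e3 - G e1 e2 * G e1 e3)^2 \<ge> 0"
  shows "tau * lorentz_form l m n v v \<le> lorentz_form l' m' n' v v"
proof -
  obtain x y z where v: "v = (x, y, z)" by (cases v)
  have expand: "lorentz_form p q r v v = lorentz_form p q r e1 e1 * x^2 + lorentz_form p q r e2 e2 * y^2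
      + lorentz_form p q r e3 e3 * z^2 + 2 * lorentz_form p q r e1 e2 * x * y
      + 2 * lorentz_form p q r e1 e3 * x * z + 2 * lorentz_form p q r e2 e3 * y * z" for p q r
    unfolding v e1_def e2_def e3_def by (rule lorentz_form_expand)
  have "G v v = G e1 e1 * x^2 + G e2 e2 * y^2 + G e3 e3 * z^2
      + 2 * G e1 e2 * x * y + 2 * G e1 e3 * x * z + 2 * G e2 e3 * y * z"
    unfolding G_def expand by (simp add: algebra_simps)
  also have "\<dots> \<ge> 0" by (rule psd3_sylvester) (use assms in auto)
  finally show ?thesis unfolding G_def by simp
qed

lemma lorentz_cone_image:
  assumes v: "v \<in> lorentz_cone l m n"
    and dual: "l' = a *\<^sub>R l + b *\<^sub>R m + c *\<^sub>R n" "b^2 + c^2 \<le> a^2" "0 \<le> a"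
    and gain: "tau * lorentz_form l m n v v \<le> lorentz_form l' m' n' v v" "0 \<le> tau"
  shows "v \<in> lorentz_cone l' m' n'"
proof -
  have "0 \<le> l' \<bullet> v" unfolding dual(1) by (rule lorentz_cone_dual[OF v dual(2,3)])
  moreover have "0 \<le> lorentz_form l m n v v" using v unfolding lorentz_cone_def by simp
  hence "0 \<le> lorentz_form l' m' n' v v" using gain by (meson mult_nonneg_nonneg order_trans)
  ultimately show ?thesis unfolding lorentz_cone_def by simp
qed

section \<open>Derivatives of shifted power series\<close>

lemma fps_conv_radius_deriv_iter:
  fixes F :: "'a :: {banach, real_normed_field} fps"
  shows "fps_conv_radius F \<le> fps_conv_radius ((fps_deriv ^^ k) F)"
  by (induction k) (auto intro: order_trans fps_conv_radius_deriv)

lemma deriv_iter_eval_fps_shift: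
  fixes F :: "real fps"
  assumes y: "ereal \<bar>y - a\<bar> < fps_conv_radius F"
  shows "(deriv ^^ k) (\<lambda>y. eval_fps F (y - a)) y = eval_fps ((fps_deriv ^^ k) F) (y - a)"
  using y
proof (induction k arbitrary: y)
  case 0
  thus ?case by simp
next
  case (Suc k)
  define G where "G = (fps_deriv ^^ k) F"
  have "open {z. ereal \<bar>z - a\<bar> < fps_conv_radius F}"
    by (intro open_Collect_less continuous_intros)
  from eventually_nhds_in_open[OF this] Suc.prems
  have "eventually (\<lambda>z. ereal \<bar>z - a\<bar> < fps_conv_radius F) (nhds y)" by simp
  hence "eventually (\<lambda>z. (deriv ^^ k) (\<lambda>y. eval_fps F (y - a)) z = eval_fps G (z - a)) (nhds y)"
    by (rule eventually_mono) (use Suc.IH in \<open>simp add: G_def\<close>)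
  hence "(deriv ^^ Suc k) (\<lambda>y. eval_fps F (y - a)) y = deriv (\<lambda>z. eval_fps G (z - a)) y"
    by (simp add: deriv_cong_ev)
  also have "\<dots> = eval_fps (fps_deriv G) (y - a)"
  proof (rule DERIV_imp_deriv)
    have "ereal (norm (y - a)) < fps_conv_radius G"
      using Suc.prems fps_conv_radius_deriv_iter[of F k] unfolding G_def by auto
    hence "(eval_fps G has_field_derivative eval_fps (fps_deriv G) (y - a)) (at (y - a))"
      by (rule has_field_derivative_eval_fps)
    moreover have "((\<lambda>z. z - a) has_field_derivative 1) (at y)"
      by (auto intro!: derivative_eq_intros)
    ultimately show "((\<lambda>z. eval_fps G (z - a)) has_field_derivative eval_fps (fps_deriv G) (y - a)) (at y)"
      using DERIV_chain2[of "eval_fps G"] by fastforce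
  qed
  finally show ?case by (simp add: G_def)
qed

text \<open>Formal derivatives of positive order only see the coefficients of positive index.\<close>

lemma fps_deriv_iter_nth_nonneg:
  fixes F :: "real fps"
  assumes "\<And>n. 1 \<le> n \<Longrightarrow> 0 \<le> fps_nth F n"
  shows "0 \<le> fps_nth ((fps_deriv ^^ Suc k) F) n"
proof (induction k arbitrary: n)
  case 0
  show ?case using assms[of "Suc n"] by (simp add: fps_deriv_nth)
next
  case (Suc k)
  show ?case using Suc.IH[of "Suc n"] by (simp add: fps_deriv_nth)
qed

lemma eval_fps_nonneg:
  fixes G :: "real fps"
  assumes "\<And>n. 0 \<le> fps_nth G n" "0 \<le> s" "ereal s < fps_conv_radius G"
  shows "0 \<le> eval_fps G s"
  unfolding eval_fps_def using summable_fps[of s G] assms by (intro suminf_nonneg) auto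

lemma deriv_iter_nonneg_of_fps:
  fixes F :: "real fps" and f :: "real \<Rightarrow> real"
  assumes local: "eventually (\<lambda>z. f z = eval_fps F (z - a)) (nhds y)"
    and coeffs: "\<And>n. 1 \<le> n \<Longrightarrow> 0 \<le> fps_nth F n"
    and y: "a \<le> y" "ereal (y - a) < fps_conv_radius F"
  shows "0 \<le> (deriv ^^ Suc k) f y"
proof -
  have "(deriv ^^ Suc k) f y = (deriv ^^ Suc k) (\<lambda>z. eval_fps F (z - a)) y"
    using local by (rule higher_deriv_cong_ev) simp
  also have "\<dots> = eval_fps ((fps_deriv ^^ Suc k) F) (y - a)"
    using y by (intro deriv_iter_eval_fps_shift) simp
  also have "\<dots> \<ge> 0"
  proof (rule eval_fps_nonneg)
    show "0 \<le> fps_nth ((fps_deriv ^^ Suc k) F) n" for n by (rule fps_deriv_iter_nth_nonneg[OF coeffs])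
    show "ereal (y - a) < fps_conv_radius ((fps_deriv ^^ Suc k) F)"
      using y(2) fps_conv_radius_deriv_iter by (rule order_less_le_trans)
  qed (use y in simp)
  finally show ?thesis .
qed

lemma fps_conv_radius_geI_bounded:
  fixes F :: "real fps"
  assumes bound: "\<And>n. \<bar>fps_nth F n\<bar> * s ^ n \<le> B" and r: "0 \<le> r" "r < s"
  shows "ereal r \<le> fps_conv_radius F"
proof -
  have "summable (\<lambda>n. B * (r / s) ^ n)"
    using r by (intro summable_mult summable_geometric) simp
  moreover have "norm (fps_nth F n * r ^ n) \<le> B * (r / s) ^ n" for n
  proof -
    have "norm (fps_nth F n * r ^ n) = \<bar>fps_nth F n\<bar> * s ^ n * (r / s) ^ n"
      using r by (simp add: abs_mult power_divide)
    also have "\<dots> \<le> B * (r / s) ^ n"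
      using bound r by (intro mult_right_mono) simp_all
    finally show ?thesis .
  qed
  ultimately have "summable (\<lambda>n. fps_nth F n * r ^ n)" by (rule summable_comparison_test')
  hence "norm r \<le> conv_radius (fps_nth F)" by (rule conv_radius_geI)
  thus ?thesis using r by (simp add: fps_conv_radius_def)
qed

lemma ratfun_eq_quotient:
  assumes "poly Q x \<noteq> 0"
  shows "poly (red_den P Q) x \<noteq> 0 \<and> ratfun P Q x = poly P x / poly Q x"
proof -
  define g where "g = gcd P Q"
  have P: "poly P x = poly (red_num P Q) x * poly g x"
    unfolding red_num_def g_def by (metis dvd_div_mult_self gcd_dvd1 poly_mult)
  have Q: "poly Q x = poly (red_den P Q) x * poly g x"
    unfolding red_den_def g_def by (metis dvd_div_mult_self gcd_dvd2 poly_mult)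
  from assms Q have "poly (red_den P Q) x \<noteq> 0" "poly g x \<noteq> 0" by auto
  thus ?thesis unfolding ratfun_def P Q by simp
qed

lemma poly_cubic_shift:
  fixes n0 n1 n2 n3 m0 m1 m2 m3 a z :: real
  assumes "m0 = n0 + n1*a + n2*a^2 + n3*a^3" "m1 = n1 + 2*n2*a + 3*n3*a^2" "m2 = n2 + 3*n3*a" "m3 = n3"
  shows "poly [:n0, n1, n2, n3:] (a + z) = poly [:m0, m1, m2, m3:] z"
  unfolding assms by (simp add: algebra_simps power2_eq_square power3_eq_cube)

lemma fps_mult_poly_nth_small:
  fixes D :: "'a :: comm_ring_1 poly"
  shows "fps_nth (fps_of_poly D * Abs_fps c) 0 = coeff D 0 * c 0"
    and "fps_nth (fps_of_poly D * Abs_fps c) 1 = coeff D 0 * c 1 + coeff D 1 * c 0"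
    and "fps_nth (fps_of_poly D * Abs_fps c) 2 = coeff D 0 * c 2 + coeff D 1 * c 1 + coeff D 2 * c 0"
    and "fps_nth (fps_of_poly D * Abs_fps c) 3
      = coeff D 0 * c 3 + coeff D 1 * c 2 + coeff D 2 * c 1 + coeff D 3 * c 0"
  by (simp_all add: fps_mult_nth eval_nat_numeral atLeast0_atMost_Suc)

lemma fps_mult_cubic_nth:
  fixes D :: "'a :: comm_ring_1 poly"
  assumes "degree D \<le> 3" "3 \<le> n"
  shows "fps_nth (fps_of_poly D * Abs_fps c) n
    = coeff D 0 * c n + coeff D 1 * c (n - 1) + coeff D 2 * c (n - 2) + coeff D 3 * c (n - 3)"
proof -
  have "fps_nth (fps_of_poly D * Abs_fps c) n = (\<Sum>i=0..n. coeff D i * c (n - i))"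
    by (simp add: fps_mult_nth)
  also have "\<dots> = (\<Sum>i=0..3. coeff D i * c (n - i))"
    using assms by (intro sum.mono_neutral_right) (auto simp: coeff_eq_0)
  also have "\<dots> = coeff D 0 * c n + coeff D 1 * c (n - 1) + coeff D 2 * c (n - 2) + coeff D 3 * c (n - 3)"
    by (simp add: eval_nat_numeral)
  finally show ?thesis .
qed

lemma scaled_recurrence:
  fixes B :: "nat \<Rightarrow> int" and d e :: real
  assumes "d \<noteq> 0" "e \<noteq> 0"
    and rec: "B (k + 3) = A0 * B k + A1 * B (k + 1) + A2 * B (k + 2)"
  defines "b j \<equiv> of_int (B j) / (d ^ j * e)"
  shows "b (k + 3) = of_int A0 / d^3 * b k + of_int A1 / d^2 * b (k + 1) + of_int A2 / d * b (k + 2)"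
proof -
  have piece: "of_int A / d ^ i * b j = of_int A * of_int (B j) / (d ^ (j + i) * e)" for A i j
    unfolding b_def using assms(1,2) by (simp add: power_add field_simps)
  have "b (k + 3) = (of_int A0 * of_int (B k) + of_int A1 * of_int (B (k + 1))
      + of_int A2 * of_int (B (k + 2))) / (d ^ (k + 3) * e)"
    unfolding b_def rec by simp
  also have "\<dots> = of_int A0 / d^3 * b k + of_int A1 / d^2 * b (k + 1) + of_int A2 / d^1 * b (k + 2)"
    unfolding piece by (simp add: add_divide_distrib eval_nat_numeral)
  finally show ?thesis by simp
qed

section \<open>The cubic x0_cubic and the signs of numerator and denominator\<close>

text \<open>The cubic is strictly increasing: its difference quotient is a positive definite quadratic.\<close>

lemma x0_cubic_strict_mono:
  assumes "x < y"
  shows "x0_cubic x < x0_cubic y"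
proof -
  define A B C :: real where "A = 43572620" and "B = 880461561" and "C = 5950520030"
  define u where "u = x + y"
  have diff: "x0_cubic y - x0_cubic x = (y - x) * (A * (x^2 + x*y + y^2) - B * u + C)"
    unfolding x0_cubic_def A_def B_def C_def u_def
    by (simp add: algebra_simps power2_eq_square power3_eq_cube)
  have "A * (x^2 + x*y + y^2) - (3*A/4) * u^2 = (A/4) * (x - y)^2"
    unfolding u_def by (simp add: algebra_simps power2_eq_square)
  moreover have "(A/4) * (x - y)^2 \<ge> 0" unfolding A_def by simp
  ultimately have "A * (x^2 + x*y + y^2) \<ge> (3*A/4) * u^2" by linarith
  moreover have "(3*A/4) * u^2 - B * u + C = (3*A/4) * (u - 2*B/(3*A))^2 + (C - B^2/(3*A))"
    unfolding A_def B_def C_def by (simp add: field_simps power2_eq_square)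
  moreover have "C - B^2/(3*A) > 0" "(3*A/4) * (u - 2*B/(3*A))^2 \<ge> 0"
    unfolding A_def B_def C_def by simp_all
  ultimately have "A * (x^2 + x*y + y^2) - B * u + C > 0" by linarith
  with assms have "x0_cubic y - x0_cubic x > 0" unfolding diff by simp
  thus ?thesis by simp
qed

definition x0 :: real where "x0 = Min {x. x0_cubic x = 0}"

lemma x0_unique_root:
  shows "{x. x0_cubic x = 0} = {x0}" and "6.778307398 < x0" and "x0 < 6.778307399"
proof -
  have lo: "x0_cubic 6.778307398 < 0" and hi: "x0_cubic 6.778307399 > 0"
    unfolding x0_cubic_def by (simp_all add: power2_eq_square power3_eq_cube)
  have "\<exists>x. 6.778307398 \<le> x \<and> x \<le> 6.778307399 \<and> x0_cubic x = 0"
    using lo hi by (intro IVT) (auto simp: x0_cubic_def intro!: continuous_intros)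
  then obtain r where r: "6.778307398 \<le> r" "r \<le> 6.778307399" "x0_cubic r = 0" by blast
  have "x = r" if "x0_cubic x = 0" for x
    using x0_cubic_strict_mono[of x r] x0_cubic_strict_mono[of r x] that r(3)
    by (cases x r rule: linorder_cases) auto
  hence roots: "{x. x0_cubic x = 0} = {r}" using r(3) by blast
  hence "x0 = r" unfolding x0_def by simp
  moreover have "r \<noteq> 6.778307398" "r \<noteq> 6.778307399"
    using r(3) lo hi by (metis less_irrefl)+
  ultimately show "{x. x0_cubic x = 0} = {x0}" "6.778307398 < x0" "x0 < 6.778307399"
    using roots r(1,2) by auto
qed

lemma psi32_num_cubic: "poly psi32_num y = - x0_cubic (- y) / 13451175530"
  unfolding psi32_num_def x0_cubic_def by (simp add: algebra_simps power2_eq_square power3_eq_cube)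

lemma psi32_num_sign: "0 \<le> poly psi32_num y \<longleftrightarrow> - x0 \<le> y"
proof -
  have root: "x0_cubic x0 = 0" using x0_unique_root(1) by blast
  have "x0_cubic (- y) \<le> 0 \<longleftrightarrow> - y \<le> x0"
    using x0_cubic_strict_mono[of "- y" x0] x0_cubic_strict_mono[of x0 "- y"] root
    by (cases "- y" x0 rule: linorder_cases) auto
  thus ?thesis unfolding psi32_num_cubic by auto
qed

lemma psi32_den_ge_1: "y \<le> 0 \<Longrightarrow> 1 \<le> poly psi32_den y"
proof -
  assume y: "y \<le> 0"
  have "poly psi32_den y = 1 + (150/269) * (- y) + (8/65) * y^2 + (4/327) * (- y)^3"
    unfolding psi32_den_def by (simp add: algebra_simps power2_eq_square power3_eq_cube)
  moreover have "0 \<le> (150/269) * (- y)" "0 \<le> (8/65) * y^2" "0 \<le> (4/327) * (- y)^3" using y by auto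
  ultimately show ?thesis by linarith
qed

lemma psi32_ratfun_nonpos: "y \<le> 0 \<Longrightarrow> poly (red_den psi32_num psi32_den) y \<noteq> 0
  \<and> ratfun psi32_num psi32_den y = poly psi32_num y / poly psi32_den y"
  using psi32_den_ge_1 by (intro ratfun_eq_quotient) fastforce

section \<open>The recurrence for the scaled Taylor coefficients and its invariant cone\<close>

text \<open>The scaled coefficients satisfy b_(n+3) = rc0 b_n + rc1 b_(n+1) + rc2 b_(n+2); rec_shift is the
  corresponding map on consecutive triples and rec_shift_adj its adjoint.\<close>

definition rc0 :: real where "rc0 = 41305844946860000 / 48098875986026039"

definition rc1 :: real where "rc1 = - 125555150451831600 / 48098875986026039"

definition rc2 :: real where "rc2 = 132105288195229860 / 48098875986026039"

definition rec_shift :: "real \<times> real \<times> real \<Rightarrow> real \<times> real \<times> real" where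
  "rec_shift = (\<lambda>(x, y, z). (y, z, rc0 * x + rc1 * y + rc2 * z))"

definition rec_shift_adj :: "real \<times> real \<times> real \<Rightarrow> real \<times> real \<times> real" where
  "rec_shift_adj = (\<lambda>(p0, p1, p2). (rc0 * p2, p0 + rc1 * p2, p1 + rc2 * p2))"

lemma inner_rec_shift: "p \<bullet> rec_shift v = rec_shift_adj p \<bullet> v"
  by (cases p; cases v) (simp add: rec_shift_def rec_shift_adj_def inner_triple algebra_simps)

lemma rec_shift_lorentz_cone:
  "rec_shift v \<in> lorentz_cone l m n
     \<longleftrightarrow> v \<in> lorentz_cone (rec_shift_adj l) (rec_shift_adj m) (rec_shift_adj n)"
  by (simp add: lorentz_cone_def lorentz_form_def inner_rec_shift)

definition cone_l :: "real \<times> real \<times> real" where "cone_l = (90017/10000, - 111981/6250, 99901/10000)"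

definition cone_m :: "real \<times> real \<times> real" where "cone_m = (- 202063/25000, 904897/50000, - 1009101/100000)"

definition cone_n :: "real \<times> real \<times> real" where "cone_n = (113863/25000, - 130377/20000, 45643/25000)"

definition coeff_cone :: "(real \<times> real \<times> real) set" where
  "coeff_cone = lorentz_cone cone_l cone_m cone_n"

lemmas cone_data = cone_l_def cone_m_def cone_n_def rec_shift_adj_def rc0_def rc1_def rc2_def

text \<open>Dual certificate: cone_l composed with the recurrence is a combination of the cone
  functionals whose weights satisfy the condition of lorentz_cone_dual.\<close>

lemma cone_adj_l: "rec_shift_adj cone_l =
    (750426518517152850233571531449924/787383445025508836188713261070039) *\<^sub>R cone_l
  + (- 824756391654311429337550424/787383445025508836188713261070039) *\<^sub>R cone_m
  + (- 1497820724653667971989124814/787383445025508836188713261070039) *\<^sub>R cone_n"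
  by (simp add: cone_data)

text \<open>Writing Q v for lorentz_form cone_l cone_m cone_n v v, these are the entries of the Gram
  matrix of Q (rec_shift v) - 9047/10000 * Q v; by Sylvester's criterion it is positive semidefinite.\<close>

lemma cone_gain_gram:
  defines "G u w \<equiv> lorentz_form (rec_shift_adj cone_l) (rec_shift_adj cone_m) (rec_shift_adj cone_n) u w
    - 9047/10000 * lorentz_form cone_l cone_m cone_n u w"
  shows "G (1, 0, 0) (1, 0, 0) = 35118807096081823767399668498938848039588295049/57837546777977809136489989650738025000000000000"
    and "G (0, 1, 0) (0, 1, 0) = 116201993444604497119109620088613288288498982463/46270037422382247309191991720590420000000000000"
    and "G (0, 0, 1) (0, 0, 1) = 34466420656388772327999634701889069817476013959/46270037422382247309191991720590420000000000000"
    and "G (1, 0, 0) (0, 1, 0) = - 70882193777998293190404424475137563288576704439/57837546777977809136489989650738025000000000000"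
    and "G (1, 0, 0) (0, 0, 1) = 18895157775576236925700001546487499078937570519/28918773388988904568244994825369012500000000000"
    and "G (0, 1, 0) (0, 0, 1) = - 157022709293155685271560808961329446030215019549/115675093555955618272979979301476050000000000000"
  unfolding G_def by (simp_all add: lorentz_form_def cone_data inner_triple)

lemma cone_gain: "9047/10000 * lorentz_form cone_l cone_m cone_n v v
    \<le> lorentz_form (rec_shift_adj cone_l) (rec_shift_adj cone_m) (rec_shift_adj cone_n) v v"
  by (rule lorentz_form_gain) (simp_all only: cone_gain_gram, simp_all add: power2_eq_square)

lemma coeff_cone_step:
  assumes "v \<in> coeff_cone"
  shows "rec_shift v \<in> coeff_cone"
proof -
  have "v \<in> lorentz_cone (rec_shift_adj cone_l) (rec_shift_adj cone_m) (rec_shift_adj cone_n)"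
    using assms unfolding coeff_cone_def
    by (rule lorentz_cone_image[OF _ cone_adj_l _ _ cone_gain]) (simp_all add: power2_eq_square)
  thus ?thesis unfolding coeff_cone_def rec_shift_lorentz_cone .
qed

lemma coeff_cone_decay:
  assumes "v \<in> coeff_cone"
  shows "cone_l \<bullet> rec_shift v \<le> cone_l \<bullet> v"
proof -
  have cert: "cone_l - rec_shift_adj cone_l =
      (36956926508355985955141729620115/787383445025508836188713261070039) *\<^sub>R cone_l
    + (824756391654311429337550424/787383445025508836188713261070039) *\<^sub>R cone_m
    + (1497820724653667971989124814/787383445025508836188713261070039) *\<^sub>R cone_n"
    by (simp add: cone_data)
  have "0 \<le> (cone_l - rec_shift_adj cone_l) \<bullet> v"
    unfolding cert using assms unfolding coeff_cone_def by (rule lorentz_cone_dual) (simp_all add: power2_eq_square)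
  thus ?thesis by (simp add: inner_rec_shift inner_diff_left)
qed

lemma coeff_cone_bound:
  assumes "(x, y, z) \<in> coeff_cone"
  shows "0 \<le> x \<and> x \<le> 2 * (cone_l \<bullet> (x, y, z))"
proof -
  have cert1: "(1, 0, 0) =
      (16370004760850000/16370100732796001) *\<^sub>R cone_l
    + (16206305586900000/16370100732796001) *\<^sub>R cone_m
    + (3932200000/16370100732796001) *\<^sub>R cone_n"
    by (simp add: cone_data)
  have cert2: "2 *\<^sub>R cone_l - (1, 0, 0) =
      (16370196704742002/16370100732796001) *\<^sub>R cone_l
    + (- 16206305586900000/16370100732796001) *\<^sub>R cone_m
    + (- 3932200000/16370100732796001) *\<^sub>R cone_n"
    by (simp add: cone_data)
  have "0 \<le> (1, 0, 0) \<bullet> (x, y, z)"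
    unfolding cert1 using assms unfolding coeff_cone_def by (rule lorentz_cone_dual) (simp_all add: power2_eq_square)
  moreover have "0 \<le> (2 *\<^sub>R cone_l - (1, 0, 0)) \<bullet> (x, y, z)"
    unfolding cert2 using assms unfolding coeff_cone_def by (rule lorentz_cone_dual) (simp_all add: power2_eq_square)
  ultimately show ?thesis by (simp add: inner_diff_left inner_triple)
qed

text \<open>Integer numerators of the scaled Taylor coefficients, and their recurrence.\<close>

fun taylor_int :: "nat \<Rightarrow> int" where
  "taylor_int 0 = -433418765223"
| "taylor_int (Suc 0) = 1888717687956595658419024745123355300"
| "taylor_int (Suc (Suc 0)) = 9033510804520889223714137694139473177537774184500"
| "taylor_int (Suc (Suc (Suc 0))) =
     924975031752167027814241962679093397954802451580523741593847186075210000"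
| "taylor_int (Suc (Suc (Suc (Suc k)))) =
     95561149572716542473987943162076437848636254060000 * taylor_int (Suc k)
     - 6039061610989489325518572843032400 * taylor_int (Suc (Suc k))
     + 132105288195229860 * taylor_int (Suc (Suc (Suc k)))"

lemma taylor_int_rec:
  assumes "1 \<le> k"
  shows "taylor_int (k + 3) = 95561149572716542473987943162076437848636254060000 * taylor_int k
     + (- 6039061610989489325518572843032400) * taylor_int (k + 1)
     + 132105288195229860 * taylor_int (k + 2)"
proof -
  obtain j where "k = Suc j" using assms by (cases k) auto
  thus ?thesis by (simp add: numeral_eq_Suc)
qed

lemma taylor_int_1: "taylor_int 1 = 1888717687956595658419024745123355300" by simp

lemma taylor_int_2: "taylor_int 2 = 9033510804520889223714137694139473177537774184500" by (simp add: numeral_eq_Suc)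

lemma taylor_int_3: "taylor_int 3 = 924975031752167027814241962679093397954802451580523741593847186075210000" by (simp add: numeral_eq_Suc)

lemma taylor_int_4: "taylor_int 4 = 122374526622563059352299400945145635829716538559112191030682054945090474103352228210800000"
  using taylor_int_rec[of 1] taylor_int_1 taylor_int_2 taylor_int_3 by simp

lemma taylor_int_5: "taylor_int 5 = 10580341765102903259286744729409691569602495329403876462396699366425715559009761023651722028582981754000000"
  using taylor_int_rec[of 2] taylor_int_2 taylor_int_3 taylor_int_4 by simp

lemma taylor_int_6: "taylor_int 6 = 747083469553911273388081675407874955391988192159135761833978515058950392569630113030360493770790735787186714545397120000000"
  using taylor_int_rec[of 3] taylor_int_3 taylor_int_4 taylor_int_5 by simp

lemma taylor_int_7: "taylor_int 7 = 46492591708999096507919742809833953299681070875546344164004288937278279655639170193214872798108052017821346037871452890380976187021600000000"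
  using taylor_int_rec[of 4] taylor_int_4 taylor_int_5 taylor_int_6 by simp

lemma taylor_int_8: "taylor_int 8 = 2641303747418077784040584369667037012473650404244365091820633892243157149165052156510814762694425474356972848501262293192679287123795154822566179528000000000"
  using taylor_int_rec[of 5] taylor_int_5 taylor_int_6 taylor_int_7 by simp

lemma taylor_int_9: "taylor_int 9 = 139550722155926464786983913416569033139519426449190724159778682475894811037183796485543920990789721659365435793085831829188559932958916541240001535072397423030313440000000000"
  using taylor_int_rec[of 6] taylor_int_6 taylor_int_7 taylor_int_8 by simp

lemma taylor_int_10: "taylor_int 10 = 6927277814592826134282492974414907066139445393222181601685270205714857263330592225911454122666358300088664485005467363235829250079059044706656796241248459639860830273577698634307200000000000"
  using taylor_int_rec[of 7] taylor_int_7 taylor_int_8 taylor_int_9 by simp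

lemma taylor_int_11: "taylor_int 11 = 324780645621487125966751166879020371271741259486785565956998381341991852692915367170740486661068411644902798007226453044518502980330850534126004377168667296093695155634741047750506434790872661216000000000000"
  using taylor_int_rec[of 8] taylor_int_8 taylor_int_9 taylor_int_10 by simp

lemma taylor_int_pos:
  assumes "1 \<le> k" "k \<le> 8"
  shows "0 < taylor_int k"
proof -
  have "k \<in> {1, 2, 3, 4, 5, 6, 7, 8}" using assms by auto
  thus ?thesis by (auto simp: taylor_int_1 taylor_int_2 taylor_int_3 taylor_int_4
      taylor_int_5 taylor_int_6 taylor_int_7 taylor_int_8)
qed

text \<open>The scaled coefficient b_k is taylor_int k / (rec_den^k * rec_norm); rec_den is the common
  denominator of the recurrence coefficients.\<close>

definition rec_den :: real where "rec_den = 48098875986026039"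

definition rec_norm :: real where "rec_norm = 37002369098297859750622"

definition taylor_seq :: "nat \<Rightarrow> real" where
  "taylor_seq k = of_int (taylor_int k) / (rec_den ^ k * rec_norm)"

lemma rec_den_pos: "0 < rec_den" and rec_norm_pos: "0 < rec_norm"
  by (simp_all add: rec_den_def rec_norm_def)

lemma taylor_seq_rec:
  assumes "1 \<le> k"
  shows "taylor_seq (k + 3) = rc0 * taylor_seq k + rc1 * taylor_seq (k + 1) + rc2 * taylor_seq (k + 2)"
proof -
  have coeffs: "of_int 95561149572716542473987943162076437848636254060000 / rec_den^3 = rc0"
    "of_int (- 6039061610989489325518572843032400) / rec_den^2 = rc1"
    "of_int 132105288195229860 / rec_den = rc2"
    by (simp_all add: rec_den_def rc0_def rc1_def rc2_def)
  have "taylor_seq (k + 3) =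
      of_int 95561149572716542473987943162076437848636254060000 / rec_den^3 * taylor_seq k
    + of_int (- 6039061610989489325518572843032400) / rec_den^2 * taylor_seq (k + 1)
    + of_int 132105288195229860 / rec_den * taylor_seq (k + 2)"
    unfolding taylor_seq_def
    by (rule scaled_recurrence[OF _ _ taylor_int_rec[OF assms]])
       (use rec_den_pos rec_norm_pos in auto)
  thus ?thesis unfolding coeffs .
qed

definition taylor_triple :: "nat \<Rightarrow> real \<times> real \<times> real" where
  "taylor_triple k = (taylor_seq k, taylor_seq (k + 1), taylor_seq (k + 2))"

lemma taylor_triple_next: "1 \<le> k \<Longrightarrow> taylor_triple (Suc k) = rec_shift (taylor_triple k)"
  using taylor_seq_rec[of k] by (simp add: taylor_triple_def rec_shift_def numeral_3_eq_3)

text \<open>The triple at index 9 lies in the cone (checked after clearing denominators), hence so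
  do all later ones, with cone_l bounded by its value at 9.\<close>

lemma taylor_triple_9: "taylor_triple 9 \<in> coeff_cone"
proof -
  define s where "s = 1 / (rec_den ^ 11 * rec_norm)"
  have "s > 0" using rec_den_pos rec_norm_pos by (simp add: s_def)
  have "rec_den ^ 11 = rec_den ^ 9 * rec_den ^ 2" "rec_den ^ 11 = rec_den ^ 10 * rec_den"
    by (simp_all flip: power_add power_Suc2)
  hence "taylor_triple 9 = s *\<^sub>R (of_int (taylor_int 9) * rec_den^2, of_int (taylor_int 10) * rec_den,
      of_int (taylor_int 11))"
    using rec_den_pos rec_norm_pos by (simp add: taylor_triple_def taylor_seq_def s_def field_simps)
  moreover have "(of_int (taylor_int 9) * rec_den^2, of_int (taylor_int 10) * rec_den,
      of_int (taylor_int 11)) \<in> coeff_cone"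
    by (simp add: coeff_cone_def lorentz_cone_def lorentz_form_def cone_l_def cone_m_def cone_n_def
        inner_triple rec_den_def taylor_int_9 taylor_int_10 taylor_int_11 power2_eq_square)
  ultimately show ?thesis
    unfolding coeff_cone_def by (simp only: lorentz_cone_scale[OF \<open>s > 0\<close>])
qed

lemma taylor_triple_cone:
  assumes "9 \<le> k"
  shows "taylor_triple k \<in> coeff_cone \<and> cone_l \<bullet> taylor_triple k \<le> cone_l \<bullet> taylor_triple 9"
  using assms
proof (induction k rule: dec_induct)
  case base
  show ?case using taylor_triple_9 by simp
next
  case (step k)
  hence "taylor_triple (Suc k) = rec_shift (taylor_triple k)" by (intro taylor_triple_next) simp
  thus ?case using step.IH coeff_cone_step coeff_cone_decay by (metis order_trans)
qed

lemma taylor_seq_nonneg: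
  assumes "1 \<le> k"
  shows "0 \<le> taylor_seq k"
proof (cases "k \<le> 8")
  case True
  thus ?thesis using assms taylor_int_pos[of k] rec_den_pos rec_norm_pos by (simp add: taylor_seq_def)
next
  case False
  hence "taylor_triple k \<in> coeff_cone" using taylor_triple_cone by simp
  thus ?thesis using coeff_cone_bound unfolding taylor_triple_def by blast
qed

lemma taylor_seq_bounded: "\<exists>B. \<forall>k. \<bar>taylor_seq k\<bar> \<le> B"
proof -
  define B where "B = 2 * (cone_l \<bullet> taylor_triple 9) + (\<Sum>k<9. \<bar>taylor_seq k\<bar>)"
  have "\<bar>taylor_seq k\<bar> \<le> B" for k
  proof (cases "k < 9")
    case True
    hence "\<bar>taylor_seq k\<bar> \<le> (\<Sum>k<9. \<bar>taylor_seq k\<bar>)" by (intro member_le_sum) auto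
    moreover have "0 \<le> cone_l \<bullet> taylor_triple 9"
      using taylor_triple_9 unfolding coeff_cone_def lorentz_cone_def by simp
    ultimately show ?thesis unfolding B_def by linarith
  next
    case False
    hence "taylor_triple k \<in> coeff_cone" "cone_l \<bullet> taylor_triple k \<le> cone_l \<bullet> taylor_triple 9"
      using taylor_triple_cone[of k] by auto
    hence "0 \<le> taylor_seq k \<and> taylor_seq k \<le> 2 * (cone_l \<bullet> taylor_triple 9)"
      using coeff_cone_bound unfolding taylor_triple_def by fastforce
    moreover have "0 \<le> (\<Sum>k<9. \<bar>taylor_seq k\<bar>)" by (intro sum_nonneg) auto
    ultimately show ?thesis unfolding B_def by linarith
  qed
  thus ?thesis by blast
qed

section \<open>The Taylor expansion of psi32 at -5687/839\<close>

text \<open>The Taylor coefficients c_n = b_n / 10^n of psi32 at taylor_centre, and their power series.\<close>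

definition taylor_coeff :: "nat \<Rightarrow> real" where "taylor_coeff k = taylor_seq k / 10 ^ k"

definition psi_fps :: "real fps" where "psi_fps = Abs_fps taylor_coeff"

lemma psi_fps_nonneg: "1 \<le> n \<Longrightarrow> 0 \<le> fps_nth psi_fps n"
  by (simp add: psi_fps_def taylor_coeff_def taylor_seq_nonneg)

text \<open>The coefficients decay like 10^(-n), so the radius is at least 9.\<close>

lemma psi_fps_radius: "ereal 9 \<le> fps_conv_radius psi_fps"
proof -
  obtain B where "\<And>k. \<bar>taylor_seq k\<bar> \<le> B" using taylor_seq_bounded by blast
  hence "\<bar>fps_nth psi_fps n\<bar> * 10 ^ n \<le> B" for n
    by (simp add: psi_fps_def taylor_coeff_def)
  thus ?thesis by (rule fps_conv_radius_geI_bounded) simp_all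
qed

definition taylor_centre :: real where "taylor_centre = - 5687 / 839"

definition num_shift :: "real poly" where
  "num_shift = [:(- 1325439649/7944125976482376070), (7156364027512/4734282465126565), (- 4685220141/11285536269670), (1246/384649):]"

definition den_shift :: "real poly" where
  "den_shift = [:(48098875986026039/3376752824405805), (- 5248521581058/1341578396665), (2210228/5944315), (- 4/327):]"

lemma poly_num_shift: "poly psi32_num (taylor_centre + z) = poly num_shift z"
  unfolding psi32_num_def num_shift_def taylor_centre_def
  by (rule poly_cubic_shift) (simp_all add: power2_eq_square power3_eq_cube)

lemma poly_den_shift: "poly psi32_den (taylor_centre + z) = poly den_shift z"
  unfolding psi32_den_def den_shift_def taylor_centre_def
  by (rule poly_cubic_shift) (simp_all add: power2_eq_square power3_eq_cube)

lemma shift_degrees: "degree den_shift \<le> 3" "degree num_shift \<le> 3"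
  by (simp_all add: den_shift_def num_shift_def)

lemma den_shift_coeffs:
  "coeff den_shift 0 = 48098875986026039/3376752824405805" "coeff den_shift 1 = - 5248521581058/1341578396665"
  "coeff den_shift 2 = 2210228/5944315" "coeff den_shift 3 = - 4/327"
  by (simp_all add: den_shift_def eval_nat_numeral)

lemma num_shift_coeffs:
  "coeff num_shift 0 = - 1325439649/7944125976482376070" "coeff num_shift 1 = 7156364027512/4734282465126565"
  "coeff num_shift 2 = - 4685220141/11285536269670" "coeff num_shift 3 = 1246/384649"
  by (simp_all add: num_shift_def eval_nat_numeral)

lemma taylor_coeff_values:
  "taylor_coeff 0 = - 433418765223/37002369098297859750622"
  "taylor_coeff 1 = 94435884397829782920951237256167765/889886181224095452261669521166669223129"
  "taylor_coeff 2 = 90335108045208892237141376941394731775377741845/85605050144752121159267039482786133225252785560190112062"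
  "taylor_coeff 3 = 462487515876083513907120981339546698977401225790261870796923593037605/2058753345344986347125375543611380979101500102141844047968391266729991209"
  by (simp_all add: taylor_coeff_def taylor_seq_def rec_den_def rec_norm_def
      taylor_int_1 taylor_int_2 taylor_int_3)

text \<open>For n \<ge> 4 the recurrence makes the n-th coefficient of den_shift * psi_fps vanish.\<close>

lemma taylor_coeff_rec:
  assumes "1 \<le> k"
  shows "coeff den_shift 0 * taylor_coeff (k + 3) + coeff den_shift 1 * taylor_coeff (k + 2)
    + coeff den_shift 2 * taylor_coeff (k + 1) + coeff den_shift 3 * taylor_coeff k = 0"
proof -
  define D0 D1 D2 D3 where "D0 = coeff den_shift 0" "D1 = coeff den_shift 1"
    "D2 = coeff den_shift 2" "D3 = coeff den_shift 3"
  define b where "b = taylor_seq"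
  have D: "D0 * rc0 + 1000 * D3 = 0" "D0 * rc1 + 100 * D2 = 0" "D0 * rc2 + 10 * D1 = 0"
    unfolding D0_D1_D2_D3_def den_shift_coeffs by (simp_all add: rc0_def rc1_def rc2_def)
  have p: "(10::real) ^ (k + 3) = 10 ^ k * 1000" "(10::real) ^ (k + 2) = 10 ^ k * 100"
    "(10::real) ^ (k + 1) = 10 ^ k * 10"
    by (simp_all add: power_add)
  have "D0 * taylor_coeff (k + 3) + D1 * taylor_coeff (k + 2) + D2 * taylor_coeff (k + 1) + D3 * taylor_coeff k
      = (D0 * b (k + 3) + 10 * D1 * b (k + 2) + 100 * D2 * b (k + 1) + 1000 * D3 * b k) / (10 ^ k * 1000)"
    unfolding taylor_coeff_def b_def p by (simp add: field_simps)
  also have "D0 * b (k + 3) + 10 * D1 * b (k + 2) + 100 * D2 * b (k + 1) + 1000 * D3 * b k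
      = b k * (D0 * rc0 + 1000 * D3) + b (k + 1) * (D0 * rc1 + 100 * D2) + b (k + 2) * (D0 * rc2 + 10 * D1)"
    unfolding b_def taylor_seq_rec[OF assms] by (simp add: algebra_simps)
  also have "\<dots> = 0" unfolding D by simp
  finally show ?thesis unfolding D0_D1_D2_D3_def by simp
qed

lemma psi_fps_mult_initial:
  assumes "n \<le> 3"
  shows "fps_nth (fps_of_poly den_shift * psi_fps) n = coeff num_shift n"
proof -
  have "n \<in> {0, 1, 2, 3}" using assms by auto
  then consider "n = 0" | "n = 1" | "n = 2" | "n = 3" by blast
  thus ?thesis
    by cases (simp only: psi_fps_def fps_mult_poly_nth_small den_shift_coeffs num_shift_coeffs
        taylor_coeff_values; simp)+
qed

lemma psi_fps_mult: "fps_of_poly den_shift * psi_fps = fps_of_poly num_shift"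
proof (rule fps_ext)
  fix n :: nat
  show "fps_nth (fps_of_poly den_shift * psi_fps) n = fps_nth (fps_of_poly num_shift) n"
  proof (cases "n \<le> 3")
    case True
    thus ?thesis using psi_fps_mult_initial by simp
  next
    case False
    define k where "k = n - 3"
    have k: "n = k + 3" "1 \<le> k" using False unfolding k_def by simp_all
    have "fps_nth (fps_of_poly den_shift * psi_fps) n
        = coeff den_shift 0 * taylor_coeff (k + 3) + coeff den_shift 1 * taylor_coeff (k + 2)
          + coeff den_shift 2 * taylor_coeff (k + 1) + coeff den_shift 3 * taylor_coeff k"
      using k by (simp add: psi_fps_def fps_mult_cubic_nth[OF shift_degrees(1)])
    also have "\<dots> = 0" by (rule taylor_coeff_rec[OF k(2)])
    moreover have "coeff num_shift n = 0" using k shift_degrees(2) by (intro coeff_eq_0) simp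
    ultimately show ?thesis by simp
  qed
qed

lemma psi_eq_fps:
  assumes "\<bar>z\<bar> < 9" "poly den_shift z \<noteq> 0"
  shows "poly num_shift z / poly den_shift z = eval_fps psi_fps z"
proof -
  have "ereal (norm z) < ereal 9" using assms(1) by simp
  also have "\<dots> \<le> fps_conv_radius psi_fps" by (rule psi_fps_radius)
  finally have "ereal (norm z) < fps_conv_radius psi_fps" .
  hence "poly den_shift z * eval_fps psi_fps z = eval_fps (fps_of_poly den_shift * psi_fps) z"
    by (simp add: eval_fps_mult)
  also have "\<dots> = poly num_shift z" unfolding psi_fps_mult by simp
  finally have "poly den_shift z * eval_fps psi_fps z = poly num_shift z" .
  thus ?thesis using assms(2) by (simp add: field_simps)
qed

lemma ratfun_psi_near:
  assumes "\<bar>y - taylor_centre\<bar> < 9" "poly psi32_den y \<noteq> 0"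
  shows "eventually (\<lambda>z. ratfun psi32_num psi32_den z = eval_fps psi_fps (z - taylor_centre)) (nhds y)"
proof -
  define U where "U = {z. \<bar>z - taylor_centre\<bar> < 9 \<and> poly psi32_den z \<noteq> 0}"
  have "open U" unfolding U_def
    by (intro open_Collect_conj open_Collect_less open_Collect_neq continuous_intros)
  moreover have "y \<in> U" using assms unfolding U_def by simp
  ultimately have "eventually (\<lambda>z. z \<in> U) (nhds y)" by (rule eventually_nhds_in_open)
  moreover have "ratfun psi32_num psi32_den z = eval_fps psi_fps (z - taylor_centre)" if "z \<in> U" for z
  proof -
    from that have z: "\<bar>z - taylor_centre\<bar> < 9" "poly psi32_den z \<noteq> 0" unfolding U_def by auto
    have shift: "poly psi32_num z = poly num_shift (z - taylor_centre)"
      "poly psi32_den z = poly den_shift (z - taylor_centre)"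
      using poly_num_shift[of "z - taylor_centre"] poly_den_shift[of "z - taylor_centre"] by simp_all
    have "ratfun psi32_num psi32_den z = poly psi32_num z / poly psi32_den z"
      using ratfun_eq_quotient[OF z(2)] by simp
    also have "\<dots> = eval_fps psi_fps (z - taylor_centre)"
      unfolding shift using z shift by (intro psi_eq_fps) simp_all
    finally show ?thesis .
  qed
  ultimately show ?thesis by (rule eventually_mono)
qed

lemma psi32_abs_monotonic:
  assumes "- x0 \<le> y" "y \<le> 0"
  shows "abs_monotonic_at psi32_num psi32_den y"
proof -
  have "taylor_centre < y" "y - taylor_centre < 9"
    using assms x0_unique_root(3) unfolding taylor_centre_def by simp_all
  have near: "eventually (\<lambda>z. ratfun psi32_num psi32_den z = eval_fps psi_fps (z - taylor_centre)) (nhds y)"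
    using \<open>taylor_centre < y\<close> \<open>y - taylor_centre < 9\<close> psi32_den_ge_1[OF assms(2)]
    by (intro ratfun_psi_near) auto
  have "0 \<le> (deriv ^^ k) (ratfun psi32_num psi32_den) y" for k
  proof (cases k)
    case 0
    thus ?thesis using psi32_ratfun_nonpos[OF assms(2)] psi32_num_sign[of y] psi32_den_ge_1[OF assms(2)] assms(1)
      by simp
  next
    case (Suc j)
    have "ereal (y - taylor_centre) < ereal 9" using \<open>y - taylor_centre < 9\<close> by simp
    also have "\<dots> \<le> fps_conv_radius psi_fps" by (rule psi_fps_radius)
    finally show ?thesis unfolding Suc using near psi_fps_nonneg \<open>taylor_centre < y\<close>
      by (intro deriv_iter_nonneg_of_fps) auto
  qed
  thus ?thesis using psi32_ratfun_nonpos[OF assms(2)] unfolding abs_monotonic_at_def by simp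
qed

lemma psi32_not_abs_monotonic:
  assumes "x0 < r"
  shows "\<not> abs_monotonic_at psi32_num psi32_den (- r)"
proof -
  have "- r \<le> 0" using assms x0_unique_root(2) by simp
  have "ratfun psi32_num psi32_den (- r) < 0"
    using psi32_ratfun_nonpos[OF \<open>- r \<le> 0\<close>] psi32_num_sign[of "- r"] psi32_den_ge_1[OF \<open>- r \<le> 0\<close>] assms
    by (simp add: divide_neg_pos)
  thus ?thesis unfolding abs_monotonic_at_def by (metis funpow_0 not_le)
qed

lemma psi32_radius: "radius_am psi32_num psi32_den = ereal x0"
proof -
  define S where "S = {r. r \<ge> 0 \<and> (\<forall>x\<in>{-r..0}. abs_monotonic_at psi32_num psi32_den x)} \<union> {0::real}"
  have "0 < x0" using x0_unique_root(2) by simp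
  hence "x0 \<in> S" unfolding S_def using psi32_abs_monotonic by auto
  moreover have "r \<le> x0" if "r \<in> S" for r
  proof (rule ccontr)
    assume "\<not> r \<le> x0"
    hence "abs_monotonic_at psi32_num psi32_den (- r)" using that \<open>0 < x0\<close> unfolding S_def by auto
    thus False using psi32_not_abs_monotonic \<open>\<not> r \<le> x0\<close> by simp
  qed
  ultimately have "Sup (ereal ` S) = ereal x0"
    by (intro antisym Sup_least Sup_upper) auto
  thus ?thesis unfolding radius_am_def S_def .
qed

lemma psi32_in_Pi: "(psi32_num, psi32_den) \<in> Pi_class 3 3 2"
proof -
  have "(\<lambda>z::real. poly psi32_num z / poly psi32_den z - exp z) \<in> O[at 0](\<lambda>z. z ^ 3)"
    unfolding psi32_num_def psi32_den_def by (simp, real_asymp)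
  thus ?thesis unfolding Pi_class_def psi32_num_def psi32_den_def by simp
qed

theorem mainTheorem16:
  shows "(psi32_num, psi32_den) \<in> Pi_class 3 3 2
    \<and> radius_am psi32_num psi32_den = ereal (Min {x. x0_cubic x = 0})
    \<and> 6.778307398 < Min {x. x0_cubic x = 0} \<and> Min {x. x0_cubic x = 0} < 6.778307399
    \<and> R_opt 3 3 2 > 6"
proof -
  have "radius_am psi32_num psi32_den \<le> R_opt 3 3 2"
    unfolding R_opt_def using psi32_in_Pi by (force intro: Sup_upper)
  moreover have "(6::ereal) < ereal x0" using x0_unique_root(2) by simp
  ultimately have "6 < R_opt 3 3 2" unfolding psi32_radius by (rule order_less_le_trans[rotated])
  thus ?thesis using psi32_in_Pi psi32_radius x0_unique_root(2,3) unfolding x0_def by simp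
qed

end
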